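(* (Provability logic.) For every proposition $A$: (GL) $\Box(\Box A\supset A)\supset\Box A$ holds under both $\vdash^H_{\mathbf{CPL}}$ and $\vdash^H_{\mathbf{CPL*}}$ when only transitive accessibility relations are considered. (Löb) $\vdash^H_{\mathbf{CPL}}\Box A\supset A$ implies $\vdash^H_{\mathbf{CPL}}A$, and $\vdash^H_{\mathbf{CPL*}}\Box A\supset A$ implies $\vdash^H_{\mathbf{CPL*}}A$.
   Context: A set $W$ of worlds with a binary accessibility relation $\prec$ is converse well-founded if there is no infinite chain $w_0\prec w_1\prec\cdots$; $\prec^*$ denotes its reflexive–transitive closure. Propositions: $A,B,C ::= Q\mid\bot\mid A\supset B\mid\Diamond A\mid\Box A$ ($Q$ atomic). A context $\Gamma$ is a finite collection of judgments $A[w]$. Given such $(W,\prec)$, $\Gamma\vdash_{\mathbf{CPL}}A[w]$ is defined one world at a time (provability at $w$ after provability at all worlds reachable from $w$ by one or more $\prec$-steps) as the least relation closed under: (hyp) $\Gamma,A[w]\vdash A[w]$; ($\bot E$) $\Gamma\vdash\bot[w]$ implies $\Gamma\vdash C[w]$; ($\supset I$) $\Gamma,A[w]\vdash B[w]$ implies $\Gamma\vdash A\supset B[w]$; ($\supset E$) $\Gamma\vdash A\supset B[w]$ and $\Gamma\vdash A[w]$ imply $\Gamma\vdash B[w]$; ($\Diamond I$) $w\prec w'$ and $\Gamma\vdash A[w']$ imply $\Gamma\vdash\Diamond A[w]$; ($\Box I$) if $\Gamma\vdash A[w']$ for all $w'$ with $w\prec w'$ then $\Gamma\vdash\Box A[w]$;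 ($\Diamond E$) if $\Gamma\vdash\Diamond A[w]$ and for all $w'$ with $w\prec w'$, $\Gamma\vdash A[w']$ implies $\Gamma\vdash C[w]$, then $\Gamma\vdash C[w]$; ($\Box E$) if $\Gamma\vdash\Box A[w]$ and ($\Gamma\vdash A[w']$ for all $w'$ with $w\prec w'$) implies $\Gamma\vdash C[w]$, then $\Gamma\vdash C[w]$. $\Gamma\vdash_{\mathbf{CPL*}}A[w]$ is defined identically except that: ($\bot E$) $w'\prec^* w$ and $\Gamma\vdash\bot[w]$ imply $\Gamma\vdash C[w']$; ($\Diamond E$) if $w''\prec^* w$, $\Gamma\vdash\Diamond A[w]$, and for all $w'$ with $w\prec w'$, $\Gamma\vdash A[w']$ implies $\Gamma\vdash C[w'']$, then $\Gamma\vdash C[w'']$; ($\Box E$) if $w''\prec^* w$, $\Gamma\vdash\Box A[w]$, and ($\Gamma\vdash A[w']$ for all $w'$ with $w\prec w'$) implies $\Gamma\vdash C[w'']$, then $\Gamma\vdash C[w'']$. $\vdash^H_{\mathbf{CPL}}A$ means: for every converse well-founded $(W,\prec)$, every $w\in W$ and every context $\Gamma$, $\Gamma\vdash_{\mathbf{CPL}}A[w]$; likewise $\vdash^H_{\mathbf{CPL*}}A$ with $\vdash_{\mathbf{CPL*}}$. "Holds when only transitive accessibility relations are considered" means the same quantification restricted to transitive $\prec$. *)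

theory Defs
  imports Main
begin

datatype 'a form = Atom 'a | Bot | Imp "'a form" "'a form" | Dia "'a form" | Box "'a form"

type_synonym ('a,'w) ctx = "('a form \<times> 'w) list"

definition cwf :: "('w \<Rightarrow> 'w \<Rightarrow> bool) \<Rightarrow> bool" where
  "cwf prec \<longleftrightarrow> \<not> (\<exists>f :: nat \<Rightarrow> 'w. \<forall>i. prec (f i) (f (Suc i)))"

text \<open>Provability at a single world v (least relation closed under the CPL rules),
  given the provability relation R at the other worlds (only used at worlds reachable
  from v by one or more steps).  R v G A means G |- A[v].\<close>
inductive cpl_at :: "('w \<Rightarrow> 'w \<Rightarrow> bool) \<Rightarrow> ('w \<Rightarrow> ('a,'w) ctx \<Rightarrow> 'a form \<Rightarrow> bool)
    \<Rightarrow> 'w \<Rightarrow> ('a,'w) ctx \<Rightarrow> 'a form \<Rightarrow> bool"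
  for prec R v where
  hyp: "(A, v) \<in> set G \<Longrightarrow> cpl_at prec R v G A"
| botE: "cpl_at prec R v G Bot \<Longrightarrow> cpl_at prec R v G C"
| impI: "cpl_at prec R v ((A, v) # G) B \<Longrightarrow> cpl_at prec R v G (Imp A B)"
| impE: "cpl_at prec R v G (Imp A B) \<Longrightarrow> cpl_at prec R v G A \<Longrightarrow> cpl_at prec R v G B"
| diaI: "prec v w' \<Longrightarrow> R w' G A \<Longrightarrow> cpl_at prec R v G (Dia A)"
| boxI: "(\<forall>w'. prec v w' \<longrightarrow> R w' G A) \<Longrightarrow> cpl_at prec R v G (Box A)"
| diaE: "cpl_at prec R v G (Dia A) \<Longrightarrow> (\<forall>w'. prec v w' \<longrightarrow> R w' G A \<longrightarrow> cpl_at prec R v G C)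
          \<Longrightarrow> cpl_at prec R v G C"
| boxE: "cpl_at prec R v G (Box A) \<Longrightarrow> ((\<forall>w'. prec v w' \<longrightarrow> R w' G A) \<longrightarrow> cpl_at prec R v G C)
          \<Longrightarrow> cpl_at prec R v G C"

text \<open>Same for CPL*.  The eliminations at v may use a major premise at any w with
  v \<prec>* w: either w = v (current relation) or v \<prec>+ w (relation R, already defined).\<close>
inductive cpls_at :: "('w \<Rightarrow> 'w \<Rightarrow> bool) \<Rightarrow> ('w \<Rightarrow> ('a,'w) ctx \<Rightarrow> 'a form \<Rightarrow> bool)
    \<Rightarrow> 'w \<Rightarrow> ('a,'w) ctx \<Rightarrow> 'a form \<Rightarrow> bool"
  for prec R v where
  hyp: "(A, v) \<in> set G \<Longrightarrow> cpls_at prec R v G A"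
| botE: "cpls_at prec R v G Bot \<Longrightarrow> cpls_at prec R v G C"
| botE': "prec\<^sup>+\<^sup>+ v w \<Longrightarrow> R w G Bot \<Longrightarrow> cpls_at prec R v G C"
| impI: "cpls_at prec R v ((A, v) # G) B \<Longrightarrow> cpls_at prec R v G (Imp A B)"
| impE: "cpls_at prec R v G (Imp A B) \<Longrightarrow> cpls_at prec R v G A \<Longrightarrow> cpls_at prec R v G B"
| diaI: "prec v w' \<Longrightarrow> R w' G A \<Longrightarrow> cpls_at prec R v G (Dia A)"
| boxI: "(\<forall>w'. prec v w' \<longrightarrow> R w' G A) \<Longrightarrow> cpls_at prec R v G (Box A)"
| diaE: "cpls_at prec R v G (Dia A) \<Longrightarrow> (\<forall>w'. prec v w' \<longrightarrow> R w' G A \<longrightarrow> cpls_at prec R v G C)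
          \<Longrightarrow> cpls_at prec R v G C"
| diaE': "prec\<^sup>+\<^sup>+ v w \<Longrightarrow> R w G (Dia A) \<Longrightarrow> (\<forall>w'. prec w w' \<longrightarrow> R w' G A \<longrightarrow> cpls_at prec R v G C)
          \<Longrightarrow> cpls_at prec R v G C"
| boxE: "cpls_at prec R v G (Box A) \<Longrightarrow> ((\<forall>w'. prec v w' \<longrightarrow> R w' G A) \<longrightarrow> cpls_at prec R v G C)
          \<Longrightarrow> cpls_at prec R v G C"
| boxE': "prec\<^sup>+\<^sup>+ v w \<Longrightarrow> R w G (Box A) \<Longrightarrow> ((\<forall>w'. prec w w' \<longrightarrow> R w' G A) \<longrightarrow> cpls_at prec R v G C)
          \<Longrightarrow> cpls_at prec R v G C"

text \<open>The world-by-world definition: a relation R is the CPL (resp. CPL*) provability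
  relation iff at every world it coincides with the least relation at that world built
  from R at the reachable worlds.  On a converse well-founded frame such R exists and is
  unique (well-founded recursion); provability is membership in it.\<close>
definition CPL_sol :: "('w \<Rightarrow> 'w \<Rightarrow> bool) \<Rightarrow> ('w \<Rightarrow> ('a,'w) ctx \<Rightarrow> 'a form \<Rightarrow> bool) \<Rightarrow> bool" where
  "CPL_sol prec R \<longleftrightarrow> (\<forall>v G A. R v G A = cpl_at prec R v G A)"

definition CPLs_sol :: "('w \<Rightarrow> 'w \<Rightarrow> bool) \<Rightarrow> ('w \<Rightarrow> ('a,'w) ctx \<Rightarrow> 'a form \<Rightarrow> bool) \<Rightarrow> bool" where
  "CPLs_sol prec R \<longleftrightarrow> (\<forall>v G A. R v G A = cpls_at prec R v G A)"

definition CPL_prov :: "('w \<Rightarrow> 'w \<Rightarrow> bool) \<Rightarrow> ('a,'w) ctx \<Rightarrow> 'a form \<Rightarrow> 'w \<Rightarrow> bool" where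
  "CPL_prov prec G A w \<longleftrightarrow> (\<forall>R. CPL_sol prec R \<longrightarrow> R w G A)"

definition CPLs_prov :: "('w \<Rightarrow> 'w \<Rightarrow> bool) \<Rightarrow> ('a,'w) ctx \<Rightarrow> 'a form \<Rightarrow> 'w \<Rightarrow> bool" where
  "CPLs_prov prec G A w \<longleftrightarrow> (\<forall>R. CPLs_sol prec R \<longrightarrow> R w G A)"

definition H_CPL :: "'w itself \<Rightarrow> 'a form \<Rightarrow> bool" where
  "H_CPL (_ :: 'w itself) A \<longleftrightarrow>
     (\<forall>(prec :: 'w \<Rightarrow> 'w \<Rightarrow> bool). cwf prec \<longrightarrow> (\<forall>w G. CPL_prov prec G A w))"

definition H_CPLs :: "'w itself \<Rightarrow> 'a form \<Rightarrow> bool" where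
  "H_CPLs (_ :: 'w itself) A \<longleftrightarrow>
     (\<forall>(prec :: 'w \<Rightarrow> 'w \<Rightarrow> bool). cwf prec \<longrightarrow> (\<forall>w G. CPLs_prov prec G A w))"

definition H_CPL_trans :: "'w itself \<Rightarrow> 'a form \<Rightarrow> bool" where
  "H_CPL_trans (_ :: 'w itself) A \<longleftrightarrow>
     (\<forall>(prec :: 'w \<Rightarrow> 'w \<Rightarrow> bool). cwf prec \<longrightarrow> transp prec \<longrightarrow> (\<forall>w G. CPL_prov prec G A w))"

definition H_CPLs_trans :: "'w itself \<Rightarrow> 'a form \<Rightarrow> bool" where
  "H_CPLs_trans (_ :: 'w itself) A \<longleftrightarrow>
     (\<forall>(prec :: 'w \<Rightarrow> 'w \<Rightarrow> bool). cwf prec \<longrightarrow> transp prec \<longrightarrow> (\<forall>w G. CPLs_prov prec G A w))"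

end

theory Submission
  imports Defs
begin

text \<open>Both axioms are instances of one principle: on a set of worlds closed under
  \<open>\<prec>\<close>, if \<open>\<box>A \<supset> A\<close> holds everywhere then \<open>A\<close> holds everywhere, by induction along the
  converse well-founded relation, since at each world \<open>\<box>A\<close> follows from \<open>A\<close> at all
  successors.  The Loeb rule applies it to all worlds; the GL axiom applies it, under
  the hypothesis \<open>\<box>(\<box>A \<supset> A)\<close> at \<open>w\<close>, to the successors of \<open>w\<close>, which are closed
  under \<open>\<prec>\<close> exactly when \<open>\<prec>\<close> is transitive.\<close>

lemma cwf_induct:
  assumes "cwf prec" and step: "\<And>x. (\<And>y. prec x y \<Longrightarrow> P y) \<Longrightarrow> P x"
  shows "P x"
proof -
  have "wf {(y, x). prec x y}"
    using assms(1) unfolding cwf_def wf_iff_no_infinite_down_chain by auto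
  then show ?thesis
    by (induct x rule: wf_induct_rule) (auto intro: step)
qed

locale box_imp_rules =
  fixes prec :: "'w \<Rightarrow> 'w \<Rightarrow> bool" and R :: "'w \<Rightarrow> ('a, 'w) ctx \<Rightarrow> 'a form \<Rightarrow> bool"
  assumes hyp: "(A, v) \<in> set G \<Longrightarrow> R v G A"
    and impI: "R v ((A, v) # G) B \<Longrightarrow> R v G (Imp A B)"
    and impE: "R v G (Imp A B) \<Longrightarrow> R v G A \<Longrightarrow> R v G B"
    and boxI: "(\<And>w'. prec v w' \<Longrightarrow> R w' G A) \<Longrightarrow> R v G (Box A)"
    and boxE: "R v G (Box A) \<Longrightarrow> ((\<forall>w'. prec v w' \<longrightarrow> R w' G A) \<Longrightarrow> R v G C) \<Longrightarrow> R v G C"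
begin

lemma lob_on_upward_closed:
  assumes "cwf prec"
    and closed: "\<And>x y. x \<in> S \<Longrightarrow> prec x y \<Longrightarrow> y \<in> S"
    and lob_hyp: "\<And>x. x \<in> S \<Longrightarrow> R x G (Imp (Box A) A)"
  shows "x \<in> S \<Longrightarrow> R x G A"
proof (induct x rule: cwf_induct[OF \<open>cwf prec\<close>])
  case (1 x)
  then have "R x G (Box A)"
    using closed by (blast intro: boxI)
  with lob_hyp \<open>x \<in> S\<close> show "R x G A"
    by (blast intro: impE)
qed

lemma lob_rule:
  assumes "cwf prec" and "\<And>x G. R x G (Imp (Box A) A)"
  shows "R w G A"
  using lob_on_upward_closed[of UNIV] assms by blast

lemma GL_axiom:
  assumes "cwf prec" and "transp prec"
  shows "R w G (Imp (Box (Imp (Box A) A)) (Box A))"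
proof (rule impI)
  let ?G = "(Box (Imp (Box A) A), w) # G"
  have "R w ?G (Box (Imp (Box A) A))"
    by (rule hyp) simp
  then show "R w ?G (Box A)"
  proof (rule boxE)
    assume "\<forall>w'. prec w w' \<longrightarrow> R w' ?G (Imp (Box A) A)"
    moreover have "\<And>x y. prec w x \<Longrightarrow> prec x y \<Longrightarrow> prec w y"
      using \<open>transp prec\<close> by (rule transpD)
    ultimately show "R w ?G (Box A)"
      using lob_on_upward_closed[of "{x. prec w x}"] \<open>cwf prec\<close> by (blast intro: boxI)
  qed
qed

end

lemma CPL_sol_box_imp_rules:
  assumes "CPL_sol prec R"
  shows "box_imp_rules prec R"
proof -
  have eq: "R v G A = cpl_at prec R v G A" for v G A
    using assms unfolding CPL_sol_def by blast
  show ?thesis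
    by unfold_locales (auto simp: eq intro: cpl_at.intros)
qed

lemma CPLs_sol_box_imp_rules:
  assumes "CPLs_sol prec R"
  shows "box_imp_rules prec R"
proof -
  have eq: "R v G A = cpls_at prec R v G A" for v G A
    using assms unfolding CPLs_sol_def by blast
  show ?thesis
    by unfold_locales (auto simp: eq intro: cpls_at.intros)
qed

theorem theorem7:
  fixes A :: "'a form"
  shows "H_CPL_trans TYPE('w) (Imp (Box (Imp (Box A) A)) (Box A))
       \<and> H_CPLs_trans TYPE('w) (Imp (Box (Imp (Box A) A)) (Box A))
       \<and> (H_CPL TYPE('w) (Imp (Box A) A) \<longrightarrow> H_CPL TYPE('w) A)
       \<and> (H_CPLs TYPE('w) (Imp (Box A) A) \<longrightarrow> H_CPLs TYPE('w) A)"
proof (intro conjI HOL.impI)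
  show "H_CPL_trans TYPE('w) (Imp (Box (Imp (Box A) A)) (Box A))"
    unfolding H_CPL_trans_def CPL_prov_def
    by (blast intro: box_imp_rules.GL_axiom CPL_sol_box_imp_rules)
  show "H_CPLs_trans TYPE('w) (Imp (Box (Imp (Box A) A)) (Box A))"
    unfolding H_CPLs_trans_def CPLs_prov_def
    by (blast intro: box_imp_rules.GL_axiom CPLs_sol_box_imp_rules)
  show "H_CPL TYPE('w) A" if "H_CPL TYPE('w) (Imp (Box A) A)"
    using that unfolding H_CPL_def CPL_prov_def
    by (blast intro: box_imp_rules.lob_rule CPL_sol_box_imp_rules)
  show "H_CPLs TYPE('w) A" if "H_CPLs TYPE('w) (Imp (Box A) A)"
    using that unfolding H_CPLs_def CPLs_prov_def
    by (blast intro: box_imp_rules.lob_rule CPLs_sol_box_imp_rules)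
qed

end
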